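(* Let $(X,d_X)$ be a compact geodesic metric space, $r\in X$, $d=d_X(r,\cdot)$, and let $(G,d_G)$ be either the metric Reeb graph of $d$ or the metric $\alpha$-Reeb graph of $d$ (for some $\alpha>0$ and some covering $\mathcal I$), assumed to be a finite graph, with induced function $d_*:G\to\mathbb R_+$. If $\delta$ is a path in $G$ joining two points $p,p'\in G$ such that $d_*\circ\delta$ is strictly increasing, then $\delta$ is a shortest path between $p$ and $p'$ and $d_G(p,p')=d_*(p')-d_*(p)$.
   Context: Reeb graph: for $x,y\in X$ set $x\sim y$ iff $d(x)=d(y)$ and $x,y$ lie in the same path-connected component of $d^{-1}(d(x))$; $G=X/\sim$, with quotient map $\pi:X\to G$. $\alpha$-Reeb graph: given $\alpha>0$ and a covering $\mathcal I=\{I_i\}$ of the range of $d$ by open intervals of length at most $\alpha$, let $\sim_\alpha$ be the transitive closure of the relation "$d(x)=d(y)$ and $x,y$ lie in the same path-connected component of $d^{-1}(I_i)$ for some $i$"; $G=X/\sim_\alpha$ with quotient map $\pi$. In both cases $d$ induces $d_*:G\to\mathbb R_+$ with $d=d_*\circ\pi$. Metric structure (assuming $G$ is a finite topological graph): the vertex set $V$ consists of the points of degree $\neq 2$, the local maxima of $d_*$, and $\pi(r)$; the edges are the connected components of $G\setminus V$. Each edge, homeomorphic to an interval, is given length equal to the absolute difference of $d_*$ at its endpoints, the distance between two points $p,p'$ of the same edge being $|d_*(p)-d_*(p')|$; $d_G$ is the resulting metric-graph (shortest path) metric on $G$. *)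

theory Defs
  imports "HOL-Analysis.Analysis"
begin

definition geodesic_space :: "'a::metric_space set \<Rightarrow> bool" where
  "geodesic_space X \<longleftrightarrow>
     (\<forall>x\<in>X. \<forall>y\<in>X. \<exists>\<gamma>::real \<Rightarrow> 'a. \<gamma> 0 = x \<and> \<gamma> 1 = y \<and> \<gamma> ` {0..1} \<subseteq> X \<and>
        (\<forall>s\<in>{0..1}. \<forall>t\<in>{0..1}. dist (\<gamma> s) (\<gamma> t) = \<bar>s - t\<bar> * dist x y))"

definition reeb_rel :: "'a::topological_space set \<Rightarrow> ('a \<Rightarrow> real) \<Rightarrow> 'a \<Rightarrow> 'a \<Rightarrow> bool" where
  "reeb_rel X f x y \<longleftrightarrow> x \<in> X \<and> y \<in> X \<and> f x = f y \<and>
       path_component {z \<in> X. f z = f x} x y"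

definition interval_cover :: "real \<Rightarrow> real set set \<Rightarrow> real set \<Rightarrow> bool" where
  "interval_cover \<alpha> I S \<longleftrightarrow>
     (\<forall>J\<in>I. \<exists>a b. a < b \<and> b - a \<le> \<alpha> \<and> J = {a<..<b}) \<and> S \<subseteq> \<Union>I"

definition alpha_reeb_base :: "'a::topological_space set \<Rightarrow> ('a \<Rightarrow> real) \<Rightarrow> real set set \<Rightarrow> 'a \<Rightarrow> 'a \<Rightarrow> bool" where
  "alpha_reeb_base X f I x y \<longleftrightarrow> x \<in> X \<and> y \<in> X \<and> f x = f y \<and>
       (\<exists>J\<in>I. path_component {z \<in> X. f z \<in> J} x y)"

definition alpha_reeb_rel :: "'a::topological_space set \<Rightarrow> ('a \<Rightarrow> real) \<Rightarrow> real set set \<Rightarrow> 'a \<Rightarrow> 'a \<Rightarrow> bool" where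
  "alpha_reeb_rel X f I = (alpha_reeb_base X f I)\<^sup>+\<^sup>+"

definition quot_map :: "'a set \<Rightarrow> ('a \<Rightarrow> 'a \<Rightarrow> bool) \<Rightarrow> 'a \<Rightarrow> 'a set" where
  "quot_map X R x = {y \<in> X. R x y}"

definition induced_fun :: "('a \<Rightarrow> real) \<Rightarrow> 'a set \<Rightarrow> real" where
  "induced_fun f c = f (SOME x. x \<in> c)"

definition finite_top_graph :: "'b topology \<Rightarrow> bool" where
  "finite_top_graph T \<longleftrightarrow> Hausdorff_space T \<and> compact_space T \<and>
     (\<exists>V. finite V \<and> V \<subseteq> topspace T \<and>
        finite (connected_components_of (subtopology T (topspace T - V))) \<and>
        (\<forall>E \<in> connected_components_of (subtopology T (topspace T - V)).
           \<exists>h a b. homeomorphic_map (top_of_set {0<..<1::real}) (subtopology T E) h \<and>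
              a \<in> V \<and> b \<in> V \<and> limitin T h a (at_right 0) \<and> limitin T h b (at_left 1)))"

definition star_nbhd :: "'b topology \<Rightarrow> 'b \<Rightarrow> 'b set \<Rightarrow> nat \<Rightarrow> bool" where
  "star_nbhd T p U n \<longleftrightarrow> openin T U \<and> p \<in> U \<and>
     finite (connected_components_of (subtopology T (U - {p}))) \<and>
     card (connected_components_of (subtopology T (U - {p}))) = n \<and>
     (\<forall>C \<in> connected_components_of (subtopology T (U - {p})).
        \<exists>h. homeomorphic_map (top_of_set {0..<1::real}) (subtopology T (C \<union> {p})) h \<and> h 0 = p)"

definition degree :: "'b topology \<Rightarrow> 'b \<Rightarrow> nat" where
  "degree T p = (THE n. \<exists>U. star_nbhd T p U n)"

definition is_local_max :: "'b topology \<Rightarrow> ('b \<Rightarrow> real) \<Rightarrow> 'b \<Rightarrow> bool" where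
  "is_local_max T f p \<longleftrightarrow> (\<exists>U. openin T U \<and> p \<in> U \<and> (\<forall>q\<in>U. f q \<le> f p))"

definition graph_vertices :: "'b topology \<Rightarrow> ('b \<Rightarrow> real) \<Rightarrow> 'b \<Rightarrow> 'b set" where
  "graph_vertices T f v =
     {p \<in> topspace T. degree T p \<noteq> 2} \<union> {p \<in> topspace T. is_local_max T f p} \<union> {v}"

definition graph_edges :: "'b topology \<Rightarrow> ('b \<Rightarrow> real) \<Rightarrow> 'b \<Rightarrow> 'b set set" where
  "graph_edges T f v = connected_components_of (subtopology T (topspace T - graph_vertices T f v))"

text \<open>Shortest-path metric of the metric graph: each edge carries the metric
  |f p - f p'| (its length being the difference of f at its endpoints); the distance is
  the infimum of lengths of chains whose consecutive points lie in a common closed edge.\<close>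
definition graph_dist :: "'b topology \<Rightarrow> ('b \<Rightarrow> real) \<Rightarrow> 'b \<Rightarrow> 'b \<Rightarrow> 'b \<Rightarrow> real" where
  "graph_dist T f v p p' = Inf {(\<Sum>i<n. \<bar>f (q i) - f (q (Suc i))\<bar>) | q n.
      q 0 = p \<and> q n = p' \<and>
      (\<forall>i<n. \<exists>E \<in> graph_edges T f v. q i \<in> T closure_of E \<and> q (Suc i) \<in> T closure_of E)}"

definition path_length :: "('b \<Rightarrow> 'b \<Rightarrow> real) \<Rightarrow> (real \<Rightarrow> 'b) \<Rightarrow> ereal" where
  "path_length D \<gamma> = (SUP (t, n) \<in> {(t, n). t 0 = 0 \<and> t n = 1 \<and> (\<forall>i<n. t i \<le> t (Suc i))}.
       ereal (\<Sum>i<n. D (\<gamma> (t i)) (\<gamma> (t (Suc i)))))"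

end

theory Submission
  imports Defs
begin

text \<open>
  Every interior point of an edge of the decomposition in \<open>finite_top_graph\<close> has a star
  neighbourhood with exactly two branches and none with another number of branches, so only
  finitely many points have degree \<open>\<noteq> 2\<close>. Since \<open>d\<^sub>* \<circ> \<delta>\<close> is strictly increasing, \<open>\<delta>\<close>
  passes through a local maximum at most at its end and is injective, so it meets the finitely
  many vertices only finitely often. Between consecutive vertex times \<open>\<delta>\<close> runs inside a
  single edge, which yields a chain of closed-edge steps along which \<open>d\<^sub>*\<close> increases; its
  length telescopes to \<open>d\<^sub>*(\<delta> b) - d\<^sub>*(\<delta> a)\<close>, while every chain is at least that long.
  Hence every partition sum of the length of \<open>\<delta>\<close> telescopes to \<open>d\<^sub>* p' - d\<^sub>* p\<close> as well.
\<close>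

lemma continuous_map_ball_into_open:
  fixes S :: "'a::metric_space set"
  assumes "continuous_map (top_of_set S) T g" "openin T W" "x \<in> S" "g x \<in> W"
  shows "\<exists>e>0. \<forall>y\<in>S. dist y x < e \<longrightarrow> g y \<in> W"
proof -
  have "openin (top_of_set S) {y \<in> S. g y \<in> W}"
    using openin_continuous_map_preimage[OF assms(1,2)] by simp
  then show ?thesis
    using assms(3,4) unfolding openin_euclidean_subtopology_iff by blast
qed

lemma connected_components_of_disjoint_open_union:
  assumes "openin T L" "openin T R" "connectedin T L" "connectedin T R" "disjnt L R"
    and "L \<noteq> {}" "R \<noteq> {}"
  shows "connected_components_of (subtopology T (L \<union> R)) = {L, R}"
proof -
  let ?X = "subtopology T (L \<union> R)"
  have sep: "separatedin T L R"
    using assms by (simp add: separatedin_open_sets)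
  have component: "connected_component_of_set ?X x = S" if S: "S = L \<or> S = R" "x \<in> S" for S x
  proof (rule connected_component_of_unique)
    show "connectedin ?X S"
      using S assms by (auto simp: connectedin_subtopology)
    show "C \<subseteq> S" if "x \<in> C \<and> connectedin ?X C" for C
      using connectedin_subset_separated_union[OF _ sep, of C] that S assms(5)
      by (auto simp: connectedin_subtopology disjnt_iff)
  qed (use S in simp)
  have "topspace ?X = L \<union> R"
    using assms openin_subset by auto
  then show ?thesis
    unfolding connected_components_of_def using component assms(6,7) by blast
qed

lemma homeomorphic_map_affine_right:
  fixes c b :: real
  assumes "c < b"
  shows "homeomorphic_map (top_of_set {0..<1}) (top_of_set {c..<b}) (\<lambda>s. c + s * (b - c))"
proof -
  have "homeomorphic_maps (top_of_set {0..<1}) (top_of_set {c..<b})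
          (\<lambda>s. c + s * (b - c)) (\<lambda>y. (y - c) / (b - c))"
    unfolding homeomorphic_maps_def using assms
    by (auto simp: field_simps intro!: continuous_intros mult_left_mono;
        smt (verit, best) mult_less_cancel_right2 right_diff_distrib)
  then show ?thesis
    using homeomorphic_map_maps by blast
qed

lemma homeomorphic_map_affine_left:
  fixes c a :: real
  assumes "a < c"
  shows "homeomorphic_map (top_of_set {0..<1}) (top_of_set {a<..c}) (\<lambda>s. c - s * (c - a))"
proof -
  have "homeomorphic_maps (top_of_set {0..<1}) (top_of_set {a<..c})
          (\<lambda>s. c - s * (c - a)) (\<lambda>y. (c - y) / (c - a))"
    unfolding homeomorphic_maps_def using assms
    by (auto simp: field_simps intro!: continuous_intros mult_left_mono;
        smt (verit, best) mult_less_cancel_right2 right_diff_distrib)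
  then show ?thesis
    using homeomorphic_map_maps by blast
qed

lemma half_open_arc_small_connected_punctured_nbhd:
  assumes U: "openin T U"
    and g: "homeomorphic_map (top_of_set {0..<1::real}) (subtopology T U) g" "g 0 = p"
    and W: "openin T W" "p \<in> W"
  shows "\<exists>N. openin T N \<and> p \<in> N \<and> N \<subseteq> W \<and> connectedin T (N - {p})"
proof -
  have gc: "continuous_map (top_of_set {0..<1::real}) T g"
    using homeomorphic_imp_continuous_map[OF g(1)] continuous_map_in_subtopology by blast
  have ginj: "inj_on g {0..<1}"
    using homeomorphic_imp_injective_map[OF g(1)] by simp
  obtain e where e: "e > 0" "\<And>s. s \<in> {0..<1} \<Longrightarrow> dist s 0 < e \<Longrightarrow> g s \<in> W"
    using continuous_map_ball_into_open[OF gc W(1), of 0] g(2) W(2) by auto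
  define \<epsilon> where "\<epsilon> = min (e/2) (1/2::real)"
  have \<epsilon>: "0 < \<epsilon>" "\<epsilon> < e" "\<epsilon> < 1"
    using e by (auto simp: \<epsilon>_def)
  define N where "N = g ` {0..<\<epsilon>}"
  have "openin (top_of_set {0..<1::real}) {0..<\<epsilon>}"
    unfolding openin_open using \<epsilon> by (intro exI[of _ "{..<\<epsilon>}"]) auto
  then have "openin (subtopology T U) N"
    unfolding N_def using homeomorphic_map_openness[OF g(1), of "{0..<\<epsilon>}"] \<epsilon> by auto
  then have "openin T N"
    using openin_trans_full U by blast
  moreover have "p \<in> N"
    unfolding N_def using g(2) \<epsilon> by force
  moreover have "N \<subseteq> W"
    unfolding N_def using e(2) \<epsilon> by (auto simp: dist_real_def)
  moreover have "connectedin T (N - {p})"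
  proof -
    have "N - {p} = g ` ({0..<\<epsilon>} - {0})"
      unfolding N_def g(2)[symmetric]
      by (subst inj_on_image_set_diff[OF ginj]) (use \<epsilon> in auto)
    also have "{0..<\<epsilon>} - {0} = {0<..<\<epsilon>}"
      by auto
    finally have "N - {p} = g ` {0<..<\<epsilon>}" .
    moreover have "{0<..<\<epsilon>} \<subseteq> {0..<1}"
      using \<epsilon> by auto
    ultimately show ?thesis
      using connectedin_continuous_map_image[OF gc, of "{0<..<\<epsilon>}"]
      by (simp add: connectedin_subtopology)
  qed
  ultimately show ?thesis
    by blast
qed

lemma punctured_nbhd_between_two_sides_not_connected:
  assumes L: "openin T L" and R: "openin T R" and LR: "disjnt L R"
    and p: "p \<in> T closure_of L" "p \<in> T closure_of R"
    and N: "openin T N" "p \<in> N" "N - {p} \<subseteq> L \<union> R"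
  shows "\<not> connectedin T (N - {p})"
proof
  assume conn: "connectedin T (N - {p})"
  have "p \<notin> L" "p \<notin> R"
    using p L R LR unfolding in_closure_of disjnt_iff by blast+
  then obtain y z where "y \<in> N - {p}" "y \<in> L" "z \<in> N - {p}" "z \<in> R"
    using p N unfolding in_closure_of by (metis DiffI singletonD)
  moreover have "N - {p} \<subseteq> L \<or> N - {p} \<subseteq> R"
    using connectedin_subset_separated_union[OF conn _ N(3)] L R LR
    by (simp add: separatedin_open_sets)
  ultimately show False
    using LR by (auto simp: disjnt_iff)
qed

lemma star_nbhd_in_closure_of_branch:
  assumes "star_nbhd T p U n" "C \<in> connected_components_of (subtopology T (U - {p}))"
  shows "p \<in> T closure_of C"
proof -
  obtain g where g: "homeomorphic_map (top_of_set {0..<1::real}) (subtopology T (C \<union> {p})) g" "g 0 = p"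
    using assms unfolding star_nbhd_def by blast
  have C: "C \<subseteq> U - {p}" "U \<subseteq> topspace T"
    using connected_components_of_subset[OF assms(2)] assms(1) openin_subset
    unfolding star_nbhd_def by auto
  have gc: "continuous_map (top_of_set {0..<1::real}) T g"
    using homeomorphic_imp_continuous_map[OF g(1)] continuous_map_in_subtopology by blast
  have "g ` {0..<1} = C \<union> {p}"
    using homeomorphic_imp_surjective_map[OF g(1)] C assms(1) by (auto simp: star_nbhd_def)
  moreover have "g s \<noteq> p" if "s \<in> {0<..<1}" for s
    using inj_onD[OF homeomorphic_imp_injective_map[OF g(1)], of s 0] that g(2) by auto
  ultimately have "g ` {0<..<1} \<subseteq> C"
    by fastforce
  moreover have "{0..<1} \<inter> {0<..<1} = {0<..<1::real}"
    by auto
  then have "(0::real) \<in> top_of_set {0..<1} closure_of {0<..<1}"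
    by (simp add: closure_of_subtopology)
  then have "p \<in> T closure_of (g ` {0<..<1})"
    using continuous_map_image_closure_subset[OF gc, of "{0<..<1}"] g(2) by blast
  ultimately show ?thesis
    using closure_of_mono by blast
qed

lemma star_nbhd_one_branch_small_connected_punctured_nbhd:
  assumes st: "star_nbhd T p U 1" and W: "openin T W" "p \<in> W"
  shows "\<exists>N. openin T N \<and> p \<in> N \<and> N \<subseteq> W \<and> connectedin T (N - {p})"
proof -
  let ?K = "connected_components_of (subtopology T (U - {p}))"
  have U: "openin T U" "p \<in> U" "U \<subseteq> topspace T"
    using st openin_subset unfolding star_nbhd_def by auto
  obtain C where K: "?K = {C}"
    using st unfolding star_nbhd_def by (metis One_nat_def card_1_singleton_iff)
  have "\<Union>?K = U - {p}"
    using U(3) by (simp add: Union_connected_components_of Int_absorb1 Diff_subset[THEN order_trans])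
  then have CU: "C \<union> {p} = U"
    using K U(2) by auto
  have "\<exists>g. homeomorphic_map (top_of_set {0..<1::real}) (subtopology T (C \<union> {p})) g \<and> g 0 = p"
    using st K unfolding star_nbhd_def by blast
  then obtain g where "homeomorphic_map (top_of_set {0..<1::real}) (subtopology T U) g" "g 0 = p"
    unfolding CU by blast
  then show ?thesis
    using half_open_arc_small_connected_punctured_nbhd[OF U(1) _ _ W] by blast
qed

lemma star_nbhd_branch_meets_side:
  assumes "star_nbhd T p U n" "C \<in> connected_components_of (subtopology T (U - {p}))"
    and "openin T W" "p \<in> W" "W - {p} = L \<union> R"
  shows "C \<inter> L \<noteq> {} \<or> C \<inter> R \<noteq> {}"
proof -
  obtain z where "z \<in> C" "z \<in> W"
    using star_nbhd_in_closure_of_branch[OF assms(1,2)] assms(3,4) unfolding in_closure_of by blast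
  moreover have "z \<noteq> p"
    using connected_components_of_subset[OF assms(2)] \<open>z \<in> C\<close> by auto
  ultimately show ?thesis
    using assms(5) by blast
qed

text \<open>
  Each branch meets one of the two sides and so is the component containing it; a single
  branch would give arbitrarily small neighbourhoods of \<open>p\<close> with connected punctured part,
  which the two sides separate.
\<close>
lemma star_nbhd_two_sided_point:
  assumes st: "star_nbhd T p U n"
    and W: "openin T W" "p \<in> W" "W \<subseteq> U" and sides: "W - {p} = L \<union> R"
    and L: "openin T L" "connectedin T L" "p \<in> T closure_of L"
    and R: "openin T R" "connectedin T R" "p \<in> T closure_of R"
    and LR: "disjnt L R"
  shows "n = 2"
proof -
  let ?K = "connected_components_of (subtopology T (U - {p}))"
  have U: "openin T U" "card ?K = n"
    using st unfolding star_nbhd_def by blast+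
  have "U \<subseteq> topspace T"
    using U(1) openin_subset by blast
  have LR_U: "L \<subseteq> U - {p}" "R \<subseteq> U - {p}"
    using sides W(3) by auto
  obtain x y where xy: "x \<in> L" "y \<in> R"
    using L(3) R(3) closure_of_empty by (metis empty_iff subsetI subset_empty)
  define CL where "CL = connected_component_of_set (subtopology T (U - {p})) x"
  define CR where "CR = connected_component_of_set (subtopology T (U - {p})) y"
  have C_K: "CL \<in> ?K" "CR \<in> ?K"
    unfolding CL_def CR_def connected_component_in_connected_components_of
    using xy LR_U \<open>U \<subseteq> topspace T\<close> by auto
  have "L \<subseteq> CL" "R \<subseteq> CR"
    unfolding CL_def CR_def
    by (rule connected_component_of_maximal;
        use L(2) R(2) LR_U xy in \<open>auto simp: connectedin_subtopology\<close>)+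
  have "C \<in> {CL, CR}" if C: "C \<in> ?K" for C
  proof -
    have "\<not> disjnt C CL \<or> \<not> disjnt C CR"
      using star_nbhd_branch_meets_side[OF st C W(1,2) sides] \<open>L \<subseteq> CL\<close> \<open>R \<subseteq> CR\<close>
      unfolding disjnt_iff by blast
    then show ?thesis
      using connected_components_of_overlap[OF C] C_K by (auto simp: disjnt_def)
  qed
  then have K: "?K = {CL, CR}"
    using C_K by blast
  have "CL \<noteq> CR"
  proof
    assume "CL = CR"
    then have "n = 1"
      using U(2) K by simp
    then obtain N where "openin T N" "p \<in> N" "N \<subseteq> W" "connectedin T (N - {p})"
      using star_nbhd_one_branch_small_connected_punctured_nbhd[OF _ W(1,2)] st by blast
    then show False
      using punctured_nbhd_between_two_sides_not_connected[OF L(1) R(1) LR L(3) R(3)] sides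
      by blast
  qed
  then show "n = 2"
    using U(2) K by simp
qed

locale open_arc =
  fixes T :: "'b topology" and E :: "'b set" and h :: "real \<Rightarrow> 'b"
  assumes openin_arc: "openin T E"
    and homeomorphic_arc: "homeomorphic_map (top_of_set {0<..<1}) (subtopology T E) h"
begin

lemma arc_subset_topspace: "E \<subseteq> topspace T"
  using openin_arc openin_subset by blast

lemma image_arc: "h ` {0<..<1} = E"
  using homeomorphic_imp_surjective_map[OF homeomorphic_arc] arc_subset_topspace by auto

lemma inj_on_arc: "inj_on h {0<..<1}"
  using homeomorphic_imp_injective_map[OF homeomorphic_arc] by simp

lemma continuous_map_arc: "continuous_map (top_of_set {0<..<1}) T h"
  using homeomorphic_imp_continuous_map[OF homeomorphic_arc] continuous_map_in_subtopology by blast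

lemma openin_arc_segment:
  assumes "0 \<le> a" "b \<le> 1"
  shows "openin T (h ` {a<..<b})"
proof -
  have sub: "{a<..<b} \<subseteq> {0<..<1}"
    using assms by auto
  have "openin (top_of_set {0<..<1}) {a<..<b}"
    unfolding openin_open using assms by (intro exI[of _ "{a<..<b}"]) auto
  then have "openin (subtopology T E) (h ` {a<..<b})"
    using homeomorphic_map_openness[OF homeomorphic_arc] sub by simp
  then show ?thesis
    using openin_trans_full openin_arc by blast
qed

lemma connectedin_arc_segment:
  assumes "0 \<le> a" "b \<le> 1"
  shows "connectedin T (h ` {a<..<b})"
  by (rule connectedin_continuous_map_image[OF continuous_map_arc])
     (use assms in \<open>auto simp: connectedin_subtopology\<close>)

lemma arc_in_closure_of_segment:
  assumes "0 \<le> a" "a < b" "b \<le> 1" "c \<in> {a, b}" "0 < c" "c < 1"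
  shows "h c \<in> T closure_of (h ` {a<..<b})"
proof -
  have "{0<..<1} \<inter> {a<..<b} = {a<..<b}"
    using assms by auto
  then have "c \<in> top_of_set {0<..<1} closure_of {a<..<b}"
    using assms by (auto simp: closure_of_subtopology)
  then show ?thesis
    using continuous_map_image_closure_subset[OF continuous_map_arc, of "{a<..<b}"] by blast
qed

lemma homeomorphic_map_arc_subset:
  assumes "J \<subseteq> {0<..<1}"
  shows "homeomorphic_map (top_of_set J) (subtopology T (h ` J)) h"
proof -
  have "homeomorphic_map (subtopology (top_of_set {0<..<1}) J)
          (subtopology (subtopology T E) (h ` J)) h"
    by (rule homeomorphic_map_subtopologies[OF homeomorphic_arc])
       (use assms image_arc arc_subset_topspace in auto)
  moreover have "subtopology (top_of_set {0<..<1}) J = top_of_set J"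
    using assms by (simp add: subtopology_subtopology Int_absorb1)
  moreover have "subtopology (subtopology T E) (h ` J) = subtopology T (h ` J)"
    using assms image_arc by (auto simp: subtopology_subtopology intro!: arg_cong[where f="subtopology T"])
  ultimately show ?thesis
    by simp
qed

lemma arc_segment_sides:
  assumes "0 \<le> a" "a < c" "c < b" "b \<le> 1"
  shows "h ` {a<..<b} - {h c} = h ` {a<..<c} \<union> h ` {c<..<b}"
    and "disjnt (h ` {a<..<c}) (h ` {c<..<b})"
proof -
  have "h ` {a<..<b} - {h c} = h ` ({a<..<b} - {c})"
    by (subst inj_on_image_set_diff[OF inj_on_arc]) (use assms in auto)
  also have "{a<..<b} - {c} = {a<..<c} \<union> {c<..<b}"
    using assms by auto
  finally show "h ` {a<..<b} - {h c} = h ` {a<..<c} \<union> h ` {c<..<b}"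
    by (simp add: image_Un)
  have "h ` {a<..<c} \<inter> h ` {c<..<b} = h ` ({a<..<c} \<inter> {c<..<b})"
    by (rule inj_on_image_Int[OF inj_on_arc, symmetric]) (use assms in auto)
  then show "disjnt (h ` {a<..<c}) (h ` {c<..<b})"
    by (simp add: disjnt_def)
qed

lemma arc_segment_in_nbhd:
  assumes "0 < c" "c < 1" "openin T U" "h c \<in> U"
  shows "\<exists>a b. 0 < a \<and> a < c \<and> c < b \<and> b < 1 \<and> h ` {a<..<b} \<subseteq> U"
proof -
  obtain e where e: "e > 0" "\<And>s. s \<in> {0<..<1} \<Longrightarrow> dist s c < e \<Longrightarrow> h s \<in> U"
    using continuous_map_ball_into_open[OF continuous_map_arc assms(3), of c] assms by auto
  define a where "a = max (c - e/2) (c/2)"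
  define b where "b = min (c + e/2) ((c + 1)/2)"
  have "0 < a" "a < c" "c < b" "b < 1"
    using assms e(1) by (auto simp: a_def b_def min_def max_def)
  moreover have "h ` {a<..<b} \<subseteq> U"
    using e calculation by (auto simp: a_def b_def dist_real_def)
  ultimately show ?thesis
    by blast
qed

lemma star_nbhd_arc_segment:
  assumes ac: "0 \<le> a" "a < c" and cb: "c < b" "b \<le> 1"
  shows "star_nbhd T (h c) (h ` {a<..<b}) 2"
proof -
  define L where "L = h ` {a<..<c}"
  define R where "R = h ` {c<..<b}"
  have sides: "h ` {a<..<b} - {h c} = L \<union> R" "disjnt L R"
    using arc_segment_sides[OF ac cb] unfolding L_def R_def by auto
  have "L \<noteq> {}" "R \<noteq> {}"
    using ac cb unfolding L_def R_def by auto
  moreover have "openin T L" "openin T R" "connectedin T L" "connectedin T R"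
    using openin_arc_segment connectedin_arc_segment ac cb unfolding L_def R_def by auto
  ultimately have branches: "connected_components_of (subtopology T (h ` {a<..<b} - {h c})) = {L, R}"
    unfolding sides(1) using connected_components_of_disjoint_open_union sides(2) by blast
  have "L \<noteq> R"
    using sides(2) \<open>L \<noteq> {}\<close> by (auto simp: disjnt_def)
  have "{a<..c} = insert c {a<..<c}" "{c..<b} = insert c {c<..<b}"
    using ac cb by auto
  then have "L \<union> {h c} = h ` {a<..c}" "R \<union> {h c} = h ` {c..<b}"
    unfolding L_def R_def by auto
  moreover have "homeomorphic_map (top_of_set {0..<1}) (subtopology T (h ` {a<..c})) (h \<circ> (\<lambda>s. c - s * (c - a)))"
    by (rule homeomorphic_map_compose[OF homeomorphic_map_affine_left homeomorphic_map_arc_subset])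
       (use ac cb in auto)
  moreover have "homeomorphic_map (top_of_set {0..<1}) (subtopology T (h ` {c..<b})) (h \<circ> (\<lambda>s. c + s * (b - c)))"
    by (rule homeomorphic_map_compose[OF homeomorphic_map_affine_right homeomorphic_map_arc_subset])
       (use ac cb in auto)
  ultimately have "\<exists>g. homeomorphic_map (top_of_set {0..<1::real}) (subtopology T (C \<union> {h c})) g \<and> g 0 = h c"
    if "C \<in> {L, R}" for C
    using that by auto
  moreover have "openin T (h ` {a<..<b})" "h c \<in> h ` {a<..<b}"
    using openin_arc_segment ac cb by auto
  ultimately show ?thesis
    unfolding star_nbhd_def branches using \<open>L \<noteq> R\<close> by auto
qed

lemma star_nbhd_arc_point_two:
  assumes c: "0 < c" "c < 1" and st: "star_nbhd T (h c) U n"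
  shows "n = 2"
proof -
  have "openin T U" "h c \<in> U"
    using st unfolding star_nbhd_def by blast+
  then obtain a b where ab: "0 < a" "a < c" "c < b" "b < 1" and WU: "h ` {a<..<b} \<subseteq> U"
    using arc_segment_in_nbhd c by blast
  show ?thesis
  proof (rule star_nbhd_two_sided_point[OF st _ _ WU])
    show "h ` {a<..<b} - {h c} = h ` {a<..<c} \<union> h ` {c<..<b}"
      and "disjnt (h ` {a<..<c}) (h ` {c<..<b})"
      using arc_segment_sides ab by auto
    show "openin T (h ` {a<..<b})" "openin T (h ` {a<..<c})" "openin T (h ` {c<..<b})"
      and "connectedin T (h ` {a<..<c})" "connectedin T (h ` {c<..<b})"
      using openin_arc_segment connectedin_arc_segment ab by auto
    show "h c \<in> h ` {a<..<b}"
      using ab by auto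
    show "h c \<in> T closure_of (h ` {a<..<c})" "h c \<in> T closure_of (h ` {c<..<b})"
      using arc_in_closure_of_segment c ab by auto
  qed
qed

lemma degree_arc_point:
  assumes "0 < c" "c < 1"
  shows "degree T (h c) = 2"
  unfolding degree_def
proof (rule the_equality)
  show "\<exists>U. star_nbhd T (h c) U 2"
    using star_nbhd_arc_segment[of 0 c 1] assms by blast
qed (use star_nbhd_arc_point_two assms in blast)

end

lemma finite_top_graph_finite_non_degree_two:
  assumes "finite_top_graph T"
  shows "finite {p \<in> topspace T. degree T p \<noteq> 2}"
proof -
  obtain V where V: "finite V" "V \<subseteq> topspace T"
    and fin: "finite (connected_components_of (subtopology T (topspace T - V)))"
    and arcs: "\<And>E. E \<in> connected_components_of (subtopology T (topspace T - V)) \<Longrightarrow>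
                 \<exists>h. homeomorphic_map (top_of_set {0<..<1::real}) (subtopology T E) h"
    using assms unfolding finite_top_graph_def by metis
  have "openin T (topspace T - V)"
    using closedin_Hausdorff_finite V assms unfolding finite_top_graph_def closedin_def by blast
  have "degree T p = 2" if p: "p \<in> topspace T" "p \<notin> V" for p
  proof -
    obtain E where E: "E \<in> connected_components_of (subtopology T (topspace T - V))" "p \<in> E"
      using p Union_connected_components_of[of "subtopology T (topspace T - V)"] by auto
    then have "openin T E"
      using open_in_finite_connected_components[OF fin] openin_trans_full
        \<open>openin T (topspace T - V)\<close> by blast
    moreover obtain h where "homeomorphic_map (top_of_set {0<..<1::real}) (subtopology T E) h"
      using arcs E(1) by blast
    ultimately interpret open_arc T E h
      by unfold_locales
    obtain c where "c \<in> {0<..<1}" "p = h c"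
      using image_arc E(2) by blast
    then show ?thesis
      using degree_arc_point by auto
  qed
  then show ?thesis
    using V(1) by (auto intro: finite_subset)
qed

definition monotone_edge_chain ::
    "'b topology \<Rightarrow> ('b \<Rightarrow> real) \<Rightarrow> 'b \<Rightarrow> (nat \<Rightarrow> 'b) \<Rightarrow> nat \<Rightarrow> 'b \<Rightarrow> 'b \<Rightarrow> bool" where
  "monotone_edge_chain T f v q n x y \<longleftrightarrow> q 0 = x \<and> q n = y \<and>
     (\<forall>i<n. (\<exists>E\<in>graph_edges T f v. q i \<in> T closure_of E \<and> q (Suc i) \<in> T closure_of E)
            \<and> f (q i) \<le> f (q (Suc i)))"

lemma monotone_edge_chain_append:
  assumes "monotone_edge_chain T f v q\<^sub>1 n\<^sub>1 x y" "monotone_edge_chain T f v q\<^sub>2 n\<^sub>2 y z"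
  shows "monotone_edge_chain T f v (\<lambda>i. if i \<le> n\<^sub>1 then q\<^sub>1 i else q\<^sub>2 (i - n\<^sub>1)) (n\<^sub>1 + n\<^sub>2) x z"
proof -
  let ?q = "\<lambda>i. if i \<le> n\<^sub>1 then q\<^sub>1 i else q\<^sub>2 (i - n\<^sub>1)"
  have second: "?q i = q\<^sub>2 (i - n\<^sub>1)" if "n\<^sub>1 \<le> i" for i
    using that assms unfolding monotone_edge_chain_def by (cases "i = n\<^sub>1") auto
  have "(\<exists>E\<in>graph_edges T f v. ?q i \<in> T closure_of E \<and> ?q (Suc i) \<in> T closure_of E)
          \<and> f (?q i) \<le> f (?q (Suc i))" if "i < n\<^sub>1 + n\<^sub>2" for i
  proof (cases "i < n\<^sub>1")
    case True
    then show ?thesis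
      using assms(1) unfolding monotone_edge_chain_def by auto
  next
    case False
    then have "?q i = q\<^sub>2 (i - n\<^sub>1)" "?q (Suc i) = q\<^sub>2 (Suc (i - n\<^sub>1))" "i - n\<^sub>1 < n\<^sub>2"
      using second[of i] second[of "Suc i"] that by (auto simp: Suc_diff_le)
    then show ?thesis
      using assms(2) unfolding monotone_edge_chain_def by simp
  qed
  moreover have "?q (n\<^sub>1 + n\<^sub>2) = z"
    using second[of "n\<^sub>1 + n\<^sub>2"] assms(2) unfolding monotone_edge_chain_def by simp
  ultimately show ?thesis
    using assms(1) unfolding monotone_edge_chain_def by auto
qed

lemma graph_dist_monotone_edge_chain:
  assumes chain: "monotone_edge_chain T f v q n x y"
  shows "graph_dist T f v x y = f y - f x"
  unfolding graph_dist_def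
proof (rule cInf_eq_minimum)
  have "(\<Sum>i<n. \<bar>f (q i) - f (q (Suc i))\<bar>) = (\<Sum>i<n. f (q (Suc i)) - f (q i))"
    by (rule sum.cong) (use chain in \<open>auto simp: monotone_edge_chain_def\<close>)
  also have "\<dots> = f y - f x"
    using sum_lessThan_telescope[of "\<lambda>i. f (q i)" n] chain by (simp add: monotone_edge_chain_def)
  finally show "f y - f x \<in> {(\<Sum>i<n. \<bar>f (q i) - f (q (Suc i))\<bar>) | q n.
      q 0 = x \<and> q n = y \<and>
      (\<forall>i<n. \<exists>E \<in> graph_edges T f v. q i \<in> T closure_of E \<and> q (Suc i) \<in> T closure_of E)}"
    using chain unfolding monotone_edge_chain_def by (intro CollectI exI[of _ q] exI[of _ n]) auto
next
  fix l
  assume "l \<in> {(\<Sum>i<n. \<bar>f (q i) - f (q (Suc i))\<bar>) | q n.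
      q 0 = x \<and> q n = y \<and>
      (\<forall>i<n. \<exists>E \<in> graph_edges T f v. q i \<in> T closure_of E \<and> q (Suc i) \<in> T closure_of E)}"
  then obtain q n where q: "l = (\<Sum>i<n. \<bar>f (q i) - f (q (Suc i))\<bar>)" "q 0 = x" "q n = y"
    by blast
  have "f y - f x = (\<Sum>i<n. f (q (Suc i)) - f (q i))"
    using sum_lessThan_telescope[of "\<lambda>i. f (q i)" n] q by simp
  also have "\<dots> \<le> l"
    unfolding q(1) by (rule sum_mono) auto
  finally show "f y - f x \<le> l" .
qed

locale monotone_graph_path =
  fixes T :: "'b topology" and f :: "'b \<Rightarrow> real" and v :: 'b and \<delta> :: "real \<Rightarrow> 'b"
  assumes finite_graph: "finite_top_graph T" and path: "pathin T \<delta>"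
    and strict_mono: "strict_mono_on {0..1} (f \<circ> \<delta>)"
begin

lemma continuous_map_path: "continuous_map (top_of_set {0..1}) T \<delta>"
  using path unfolding pathin_def by simp

lemma path_in_topspace: "t \<in> {0..1} \<Longrightarrow> \<delta> t \<in> topspace T"
  using continuous_map_path unfolding continuous_map_def by auto

lemma path_less: "a \<in> {0..1} \<Longrightarrow> b \<in> {0..1} \<Longrightarrow> a < b \<Longrightarrow> f (\<delta> a) < f (\<delta> b)"
  using strict_mono_onD[OF strict_mono] by auto

lemma path_le: "a \<in> {0..1} \<Longrightarrow> b \<in> {0..1} \<Longrightarrow> a \<le> b \<Longrightarrow> f (\<delta> a) \<le> f (\<delta> b)"
  using path_less by (cases "a = b") (auto intro: less_imp_le)

lemma not_local_max_path:
  assumes "t \<in> {0..1}" "t < 1"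
  shows "\<not> is_local_max T f (\<delta> t)"
proof
  assume "is_local_max T f (\<delta> t)"
  then obtain U where U: "openin T U" "\<delta> t \<in> U" "\<And>q. q \<in> U \<Longrightarrow> f q \<le> f (\<delta> t)"
    unfolding is_local_max_def by blast
  obtain e where e: "e > 0" "\<And>s. s \<in> {0..1} \<Longrightarrow> dist s t < e \<Longrightarrow> \<delta> s \<in> U"
    using continuous_map_ball_into_open[OF continuous_map_path U(1)] assms U(2) by blast
  define s where "s = min 1 (t + e/2)"
  have s: "s \<in> {0..1}" "t < s" "dist s t < e"
    using assms e(1) by (auto simp: s_def dist_real_def)
  then have "f (\<delta> s) \<le> f (\<delta> t)"
    using U(3) e(2) by blast
  moreover have "f (\<delta> t) < f (\<delta> s)"
    using path_less assms(1) s by blast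
  ultimately show False
    by simp
qed

lemma finite_vertex_times: "finite {t \<in> {0..1}. \<delta> t \<in> graph_vertices T f v}"
proof -
  let ?N = "{p \<in> topspace T. degree T p \<noteq> 2} \<union> {v}"
  have "t \<in> \<delta> -` ?N \<inter> {0..1} \<union> {1}" if t: "t \<in> {0..1}" "\<delta> t \<in> graph_vertices T f v" for t
  proof (cases "t = 1")
    case False
    then have "\<not> is_local_max T f (\<delta> t)"
      using not_local_max_path t(1) by simp
    then show ?thesis
      using t unfolding graph_vertices_def by simp
  qed simp
  then have "{t \<in> {0..1}. \<delta> t \<in> graph_vertices T f v} \<subseteq> \<delta> -` ?N \<inter> {0..1} \<union> {1}"
    by blast
  moreover have "inj_on \<delta> {0..1}"
    using inj_on_imageI2[OF strict_mono_on_imp_inj_on[OF strict_mono]] .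
  then have "finite (\<delta> -` ?N \<inter> {0..1})"
    by (intro finite_vimage_IntI) (simp_all add: finite_top_graph_finite_non_degree_two[OF finite_graph])
  ultimately show ?thesis
    by (meson finite_Un finite_insert finite.emptyI finite_subset)
qed

lemma path_segment_in_closure_of_edge:
  assumes ab: "a \<in> {0..1}" "b \<in> {0..1}" "a < b"
    and no_vertex: "\<And>t. t \<in> {a<..<b} \<Longrightarrow> \<delta> t \<notin> graph_vertices T f v"
  shows "\<exists>E\<in>graph_edges T f v. \<delta> a \<in> T closure_of E \<and> \<delta> b \<in> T closure_of E"
proof -
  let ?D = "topspace T - graph_vertices T f v"
  let ?S = "\<delta> ` {a<..<b}"
  let ?m = "(a + b) / 2"
  define E where "E = connected_component_of_set (subtopology T ?D) (\<delta> ?m)"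
  have sub: "{a<..<b} \<subseteq> {0..1}" "?m \<in> {a<..<b}"
    using ab by auto
  have S_D: "?S \<subseteq> ?D"
    using no_vertex path_in_topspace sub by auto
  have "\<delta> ?m \<in> ?D"
    using S_D sub(2) by blast
  then have "E \<in> graph_edges T f v"
    unfolding graph_edges_def E_def connected_component_in_connected_components_of by simp
  moreover have "?S \<subseteq> E"
    unfolding E_def
    by (rule connected_component_of_maximal)
       (use connectedin_continuous_map_image[OF continuous_map_path] S_D sub
        in \<open>auto simp: connectedin_subtopology\<close>)
  moreover have "{0..1} \<inter> {a<..<b} = {a<..<b}"
    using sub by auto
  then have "a \<in> top_of_set {0..1} closure_of {a<..<b}" "b \<in> top_of_set {0..1} closure_of {a<..<b}"
    using ab by (auto simp: closure_of_subtopology)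
  then have "\<delta> a \<in> T closure_of ?S" "\<delta> b \<in> T closure_of ?S"
    using continuous_map_image_closure_subset[OF continuous_map_path, of "{a<..<b}"] by auto
  ultimately show ?thesis
    using closure_of_mono by blast
qed

lemma monotone_edge_chain_along_path:
  assumes "a \<in> {0..1}" "b \<in> {0..1}" "a \<le> b"
  shows "\<exists>q n. monotone_edge_chain T f v q n (\<delta> a) (\<delta> b)"
  using assms
proof (induction "card {t \<in> {a<..<b}. \<delta> t \<in> graph_vertices T f v}" arbitrary: a b rule: less_induct)
  case less
  let ?H = "\<lambda>a b. {t \<in> {a<..<b}. \<delta> t \<in> graph_vertices T f v}"
  consider "a = b" | "a < b" "?H a b = {}" | s where "s \<in> ?H a b"
    using less.prems(3) unfolding le_less by blast
  then show ?case
  proof cases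
    case 1
    then show ?thesis
      by (intro exI[of _ "\<lambda>_. \<delta> a"] exI[of _ 0]) (simp add: monotone_edge_chain_def)
  next
    case 2
    then have "\<exists>E\<in>graph_edges T f v. \<delta> a \<in> T closure_of E \<and> \<delta> b \<in> T closure_of E"
      using path_segment_in_closure_of_edge[of a b] less.prems by blast
    then have "monotone_edge_chain T f v (\<lambda>i. if i = 0 then \<delta> a else \<delta> b) 1 (\<delta> a) (\<delta> b)"
      using path_le[of a b] less.prems unfolding monotone_edge_chain_def by simp
    then show ?thesis
      by blast
  next
    case (3 s)
    then have s: "s \<in> {0..1}" "a \<le> s" "s \<le> b"
      using less.prems by auto
    have "finite (?H a b)"
      by (rule finite_subset[OF _ finite_vertex_times]) (use less.prems in auto)
    moreover have "?H a s \<subset> ?H a b" "?H s b \<subset> ?H a b"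
      using 3 by auto
    ultimately have fewer: "card (?H a s) < card (?H a b)" "card (?H s b) < card (?H a b)"
      by (auto intro: psubset_card_mono)
    have "\<exists>q n. monotone_edge_chain T f v q n (\<delta> a) (\<delta> s)"
      by (rule less.hyps) (use fewer s less.prems in auto)
    moreover have "\<exists>q n. monotone_edge_chain T f v q n (\<delta> s) (\<delta> b)"
      by (rule less.hyps) (use fewer s less.prems in auto)
    ultimately obtain q\<^sub>1 n\<^sub>1 q\<^sub>2 n\<^sub>2 where chains: "monotone_edge_chain T f v q\<^sub>1 n\<^sub>1 (\<delta> a) (\<delta> s)"
        "monotone_edge_chain T f v q\<^sub>2 n\<^sub>2 (\<delta> s) (\<delta> b)"
      by blast
    show ?thesis
      using monotone_edge_chain_append[OF chains] by blast
  qed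
qed

lemma graph_dist_along_path:
  assumes "a \<in> {0..1}" "b \<in> {0..1}" "a \<le> b"
  shows "graph_dist T f v (\<delta> a) (\<delta> b) = f (\<delta> b) - f (\<delta> a)"
proof -
  obtain q n where "monotone_edge_chain T f v q n (\<delta> a) (\<delta> b)"
    using monotone_edge_chain_along_path[OF assms] by blast
  then show ?thesis
    by (rule graph_dist_monotone_edge_chain)
qed

lemma path_length_graph_dist:
  "path_length (graph_dist T f v) \<delta> = ereal (f (\<delta> 1) - f (\<delta> 0))"
proof -
  let ?I = "{(t, n). t 0 = (0::real) \<and> t n = 1 \<and> (\<forall>i<n. t i \<le> t (Suc i))}"
  have partition_sum: "(\<Sum>i<n. graph_dist T f v (\<delta> (t i)) (\<delta> (t (Suc i)))) = f (\<delta> 1) - f (\<delta> 0)"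
    if "(t, n) \<in> ?I" for t n
  proof -
    have t: "t 0 = 0" "t n = 1" "\<And>i. i \<in> {..<n} \<Longrightarrow> t i \<le> t (Suc i)"
      using that by auto
    have "t 0 \<le> t i" "t i \<le> t n" if "i \<le> n" for i
    proof -
      have "{0..<i} \<subseteq> {..<n}" "{i..<n} \<subseteq> {..<n}"
        using that by auto
      then show "t 0 \<le> t i" "t i \<le> t n"
        using lift_Suc_mono_le_ivl[of "{..<n}" t] t(3) that by blast+
    qed
    then have "t i \<in> {0..1}" if "i \<le> n" for i
      using t(1,2) that by fastforce
    then have "graph_dist T f v (\<delta> (t i)) (\<delta> (t (Suc i))) = f (\<delta> (t (Suc i))) - f (\<delta> (t i))"
      if "i \<in> {..<n}" for i
      using t(3) that by (intro graph_dist_along_path) auto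
    then have "(\<Sum>i<n. graph_dist T f v (\<delta> (t i)) (\<delta> (t (Suc i))))
                 = (\<Sum>i<n. f (\<delta> (t (Suc i))) - f (\<delta> (t i)))"
      by (rule sum.cong[OF refl])
    also have "\<dots> = f (\<delta> 1) - f (\<delta> 0)"
      using sum_lessThan_telescope[of "\<lambda>i. f (\<delta> (t i))" n] t by simp
    finally show ?thesis .
  qed
  have "path_length (graph_dist T f v) \<delta> = (SUP tn \<in> ?I. ereal (f (\<delta> 1) - f (\<delta> 0)))"
    unfolding path_length_def by (rule SUP_cong[OF refl]) (use partition_sum in fastforce)
  also have "\<dots> = ereal (f (\<delta> 1) - f (\<delta> 0))"
  proof (rule SUP_const)
    have "((\<lambda>i. if i = 0 then 0 else 1), 1) \<in> ?I"
      by simp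
    then show "?I \<noteq> {}"
      by (metis empty_iff)
  qed
  finally show ?thesis .
qed

end

theorem lemma1:
  fixes X :: "'a::metric_space set" and r :: 'a and d :: "'a \<Rightarrow> real"
    and R :: "'a \<Rightarrow> 'a \<Rightarrow> bool" and T :: "'a set topology"
    and \<delta> :: "real \<Rightarrow> 'a set" and p p' :: "'a set"
  assumes "compact X" and "geodesic_space X" and "r \<in> X"
    and "d = (\<lambda>x. dist r x)"
    and "R = reeb_rel X d \<or>
         (\<exists>\<alpha> I. \<alpha> > 0 \<and> interval_cover \<alpha> I (d ` X) \<and> R = alpha_reeb_rel X d I)"
    and "quotient_map (top_of_set X) T (quot_map X R)"
    and "finite_top_graph T"
    and "pathin T \<delta>" and "\<delta> 0 = p" and "\<delta> 1 = p'"
    and "strict_mono_on {0..1} (induced_fun d \<circ> \<delta>)"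
  shows "path_length (graph_dist T (induced_fun d) (quot_map X R r)) \<delta>
           = ereal (graph_dist T (induced_fun d) (quot_map X R r) p p')
         \<and> graph_dist T (induced_fun d) (quot_map X R r) p p'
           = induced_fun d p' - induced_fun d p"
proof -
  interpret monotone_graph_path T "induced_fun d" "quot_map X R r" \<delta>
    using assms(7,8,11) by unfold_locales
  have "graph_dist T (induced_fun d) (quot_map X R r) (\<delta> 0) (\<delta> 1)
          = induced_fun d (\<delta> 1) - induced_fun d (\<delta> 0)"
    by (rule graph_dist_along_path) auto
  then show ?thesis
    using path_length_graph_dist assms(9,10) by simp
qed

end
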